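(* Let $P$ be a Markovian kernel on $(E,\mathcal{B})$, $S_n=\frac1n\sum_{k=0}^{n-1}P^k$, and $m$ a nonzero finite positive measure. Assume the generalized drift condition: there exist measurable $V,b:E\to[0,\infty)$ and $C\in\mathcal{B}$ with $PV\le V-1+b1_C$ on $E$; and Condition D: for every $r>0$ there exists $N_0>0$ with $\sup_{n\ge N_0}m(1_{[V\le r]}S_n(b^2))<\infty$. Then there exists $n_0>0$ with $\inf_{n\ge n_0}m(S_n1_C)>0$. *)

theory Defs
  imports "HOL-Probability.Probability"
begin

text \<open>A Markovian kernel on (E, B) = space M, sets M is a measurable map
  K : M \<rightarrow> prob_algebra M.  Its action on nonnegative functions:\<close>

definition kernel_op :: "('a \<Rightarrow> 'a measure) \<Rightarrow> ('a \<Rightarrow> ennreal) \<Rightarrow> 'a \<Rightarrow> ennreal" where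
  "kernel_op K f = (\<lambda>x. \<integral>\<^sup>+ y. f y \<partial>(K x))"

definition kernel_pow :: "('a \<Rightarrow> 'a measure) \<Rightarrow> nat \<Rightarrow> ('a \<Rightarrow> ennreal) \<Rightarrow> 'a \<Rightarrow> ennreal" where
  "kernel_pow K k f = (kernel_op K ^^ k) f"

definition cesaro_avg :: "('a \<Rightarrow> 'a measure) \<Rightarrow> nat \<Rightarrow> ('a \<Rightarrow> ennreal) \<Rightarrow> 'a \<Rightarrow> ennreal" where
  "cesaro_avg K n f = (\<lambda>x. (\<Sum>k<n. kernel_pow K k f x) / ennreal (real n))"

end

theory Submission
  imports Defs
begin

text \<open>Iterating the drift inequality gives \<open>n \<le> V + \<Sum>\<^sub>k\<^sub><\<^sub>n P\<^sup>k(b 1\<^sub>C)\<close>, and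
  \<open>2u b 1\<^sub>C \<le> u\<^sup>2 b\<^sup>2 + 1\<^sub>C\<close>, so on the sublevel set \<open>A = [V \<le> r]\<close> and for \<open>n \<ge> 2r\<close>
  one gets \<open>u \<le> u\<^sup>2 S\<^sub>n(b\<^sup>2) + S\<^sub>n 1\<^sub>C\<close>. Integrating over \<open>A\<close> and bounding the \<open>b\<^sup>2\<close> term by
  Condition D yields \<open>u m(A) \<le> u\<^sup>2 B + m(S\<^sub>n 1\<^sub>C)\<close> with \<open>B\<close> independent of \<open>n\<close>; choosing \<open>u\<close> small gives a
  uniform lower bound, since \<open>m(A) > 0\<close> for \<open>r\<close> large.\<close>

lemma kernel_pow_0 [simp]: "kernel_pow K 0 f = f"
  by (simp add: kernel_pow_def)

lemma kernel_pow_Suc: "kernel_pow K (Suc k) f = kernel_op K (kernel_pow K k f)"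
  by (simp add: kernel_pow_def)

lemma kernel_pow_Suc_right: "kernel_pow K (Suc k) f = kernel_pow K k (kernel_op K f)"
  by (simp add: kernel_pow_def funpow_Suc_right del: funpow.simps)

lemma ennreal_two_mult_indicator_le:
  assumes "0 \<le> u" "0 \<le> t"
  shows "ennreal (2 * u) * (ennreal t * indicator C y) \<le> ennreal (u\<^sup>2) * ennreal (t\<^sup>2) + indicator C y"
proof (cases "y \<in> C")
  case True
  have "2 * (u * t) * 1 \<le> (u * t)\<^sup>2 + 1\<^sup>2"
    by (rule sum_squares_bound)
  then have "ennreal (2 * u * t) \<le> ennreal (u\<^sup>2 * t\<^sup>2 + 1)"
    by (intro ennreal_leI) (simp add: power_mult_distrib mult_ac)
  then have "ennreal (2 * u * t) \<le> ennreal (u\<^sup>2 * t\<^sup>2) + 1"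
    by (subst (asm) ennreal_plus) auto
  then show ?thesis
    using True assms by (simp add: ennreal_mult[symmetric] mult_ac)
qed simp

locale markov_kernel =
  fixes M :: "'a measure" and K :: "'a \<Rightarrow> 'a measure"
  assumes kernel: "K \<in> M \<rightarrow>\<^sub>M prob_algebra M"
begin

lemma
  assumes "x \<in> space M"
  shows prob_space_kernel: "prob_space (K x)"
    and sets_kernel: "sets (K x) = sets M"
    and space_kernel: "space (K x) = space M"
proof -
  have "K x \<in> space (prob_algebra M)"
    using measurable_space[OF kernel assms] .
  then show "prob_space (K x)" and sets: "sets (K x) = sets M"
    by (auto simp: space_prob_algebra)
  then show "space (K x) = space M"
    using sets_eq_imp_space_eq by blast
qed

lemma measurable_kernel_op:
  "f \<in> borel_measurable M \<Longrightarrow> kernel_op K f \<in> borel_measurable M"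
  unfolding kernel_op_def
  using measurable_comp[OF measurable_prob_algebraD[OF kernel] nn_integral_measurable_subprob_algebra]
  by (simp add: comp_def)

lemma measurable_kernel_pow:
  "f \<in> borel_measurable M \<Longrightarrow> kernel_pow K k f \<in> borel_measurable M"
  by (induction k) (auto simp: kernel_pow_Suc intro: measurable_kernel_op)

lemma measurable_kernel_pow_kernel:
  "f \<in> borel_measurable M \<Longrightarrow> x \<in> space M \<Longrightarrow> kernel_pow K k f \<in> borel_measurable (K x)"
  using measurable_kernel_pow measurable_cong_sets[OF sets_kernel refl] by blast

lemma kernel_pow_mono:
  assumes "\<And>y. y \<in> space M \<Longrightarrow> f y \<le> g y" and "x \<in> space M"
  shows "kernel_pow K k f x \<le> kernel_pow K k g x"
  using assms(2)
proof (induction k arbitrary: x)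
  case (Suc k)
  then show ?case
    unfolding kernel_pow_Suc kernel_op_def
    by (intro nn_integral_mono) (simp add: space_kernel)
qed (simp add: assms(1))

lemma kernel_pow_add:
  assumes "f \<in> borel_measurable M" "g \<in> borel_measurable M" and "x \<in> space M"
  shows "kernel_pow K k (\<lambda>y. f y + g y) x = kernel_pow K k f x + kernel_pow K k g x"
  using assms(3)
proof (induction k arbitrary: x)
  case (Suc k)
  have "kernel_pow K (Suc k) (\<lambda>y. f y + g y) x
      = (\<integral>\<^sup>+ y. kernel_pow K k f y + kernel_pow K k g y \<partial>K x)"
    unfolding kernel_pow_Suc kernel_op_def
    by (intro nn_integral_cong) (simp add: Suc space_kernel)
  also have "\<dots> = kernel_pow K (Suc k) f x + kernel_pow K (Suc k) g x"
    unfolding kernel_pow_Suc kernel_op_def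
    using assms Suc.prems by (intro nn_integral_add measurable_kernel_pow_kernel)
  finally show ?case .
qed simp

lemma kernel_pow_cmult:
  assumes "f \<in> borel_measurable M" and "x \<in> space M"
  shows "kernel_pow K k (\<lambda>y. c * f y) x = c * kernel_pow K k f x"
  using assms(2)
proof (induction k arbitrary: x)
  case (Suc k)
  have "kernel_pow K (Suc k) (\<lambda>y. c * f y) x = (\<integral>\<^sup>+ y. c * kernel_pow K k f y \<partial>K x)"
    unfolding kernel_pow_Suc kernel_op_def
    by (intro nn_integral_cong) (simp add: Suc space_kernel)
  also have "\<dots> = c * kernel_pow K (Suc k) f x"
    unfolding kernel_pow_Suc kernel_op_def
    using assms Suc.prems by (intro nn_integral_cmult measurable_kernel_pow_kernel)
  finally show ?case .
qed simp

lemma kernel_pow_const: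
  assumes "x \<in> space M"
  shows "kernel_pow K k (\<lambda>y. c) x = c"
  using assms
proof (induction k arbitrary: x)
  case (Suc k)
  have "kernel_pow K (Suc k) (\<lambda>y. c) x = (\<integral>\<^sup>+ y. c \<partial>K x)"
    unfolding kernel_pow_Suc kernel_op_def
    by (intro nn_integral_cong) (simp add: Suc space_kernel)
  also have "\<dots> = c"
    using prob_space.emeasure_space_1[OF prob_space_kernel[OF Suc.prems]] by simp
  finally show ?case .
qed simp

lemma measurable_cesaro_avg:
  assumes "f \<in> borel_measurable M"
  shows "cesaro_avg K n f \<in> borel_measurable M"
proof -
  have "(\<lambda>x. \<Sum>k<n. kernel_pow K k f x) \<in> borel_measurable M"
    using assms by (intro borel_measurable_sum measurable_kernel_pow)
  then show ?thesis
    unfolding cesaro_avg_def divide_ennreal_def by measurable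
qed

lemma cesaro_avg_cmult_add:
  assumes "f \<in> borel_measurable M" "g \<in> borel_measurable M" and "x \<in> space M"
  shows "cesaro_avg K n (\<lambda>y. c * f y + g y) x = c * cesaro_avg K n f x + cesaro_avg K n g x"
  using assms
  by (simp add: cesaro_avg_def kernel_pow_add kernel_pow_cmult sum.distrib sum_distrib_left
      add_divide_distrib_ennreal ennreal_times_divide)

context
  fixes V g :: "'a \<Rightarrow> ennreal"
  assumes V: "V \<in> borel_measurable M" and g: "g \<in> borel_measurable M"
    and drift: "\<And>x. x \<in> space M \<Longrightarrow> kernel_op K V x + 1 \<le> V x + g x"
begin

lemma kernel_pow_drift:
  assumes "x \<in> space M"
  shows "kernel_pow K (Suc k) V x + 1 \<le> kernel_pow K k V x + kernel_pow K k g x"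
proof -
  have "kernel_pow K (Suc k) V x + 1 = kernel_pow K k (\<lambda>y. kernel_op K V y + 1) x"
    using assms V
    by (simp add: kernel_pow_Suc_right kernel_pow_add kernel_pow_const measurable_kernel_op)
  also have "\<dots> \<le> kernel_pow K k (\<lambda>y. V y + g y) x"
    using drift assms by (rule kernel_pow_mono)
  also have "\<dots> = kernel_pow K k V x + kernel_pow K k g x"
    using V g assms by (rule kernel_pow_add)
  finally show ?thesis .
qed

lemma kernel_pow_drift_iterate:
  assumes "x \<in> space M"
  shows "kernel_pow K n V x + of_nat n \<le> V x + (\<Sum>k<n. kernel_pow K k g x)"
proof (induction n)
  case (Suc n)
  have "kernel_pow K (Suc n) V x + of_nat (Suc n) = (kernel_pow K (Suc n) V x + 1) + of_nat n"
    by (simp add: add_ac)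
  also have "\<dots> \<le> (kernel_pow K n V x + of_nat n) + kernel_pow K n g x"
    using kernel_pow_drift[OF assms, of n] by (simp add: add_right_mono add_ac)
  also have "\<dots> \<le> V x + (\<Sum>k<Suc n. kernel_pow K k g x)"
    using Suc.IH by (simp add: add_right_mono add_ac)
  finally show ?case .
qed simp

lemma cesaro_avg_ge_of_drift:
  assumes gh: "\<And>y. y \<in> space M \<Longrightarrow> ennreal (2 * u) * g y \<le> h y"
    and "u \<ge> 0" "x \<in> space M" "n > 0" and Vx: "2 * V x \<le> of_nat n"
  shows "ennreal u \<le> cesaro_avg K n h x"
proof -
  have "of_nat n \<le> V x + (\<Sum>k<n. kernel_pow K k g x)"
    using kernel_pow_drift_iterate[OF \<open>x \<in> space M\<close>] by (rule order_trans[rotated]) simp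
  then have "ennreal (2 * u) * of_nat n \<le> ennreal (2 * u) * (V x + (\<Sum>k<n. kernel_pow K k g x))"
    by (rule mult_left_mono) simp
  also have "\<dots> = ennreal (2 * u) * V x + (\<Sum>k<n. kernel_pow K k (\<lambda>y. ennreal (2 * u) * g y) x)"
    using g \<open>x \<in> space M\<close> by (simp add: kernel_pow_cmult sum_distrib_left distrib_left)
  also have "ennreal (2 * u) * V x \<le> ennreal (u * n)"
  proof -
    have "ennreal (2 * u) * V x = ennreal u * (2 * V x)"
      using \<open>u \<ge> 0\<close> by (simp add: ennreal_mult mult_ac)
    also have "\<dots> \<le> ennreal u * of_nat n"
      using Vx by (rule mult_left_mono) simp
    finally show ?thesis
      using \<open>u \<ge> 0\<close> by (simp add: ennreal_mult ennreal_of_nat_eq_real_of_nat)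
  qed
  also have "(\<Sum>k<n. kernel_pow K k (\<lambda>y. ennreal (2 * u) * g y) x) \<le> (\<Sum>k<n. kernel_pow K k h x)"
    using gh \<open>x \<in> space M\<close> by (intro sum_mono kernel_pow_mono)
  also have "ennreal (2 * u) * of_nat n = ennreal (u * n) + ennreal (u * n)"
    using \<open>u \<ge> 0\<close>
    by (simp add: ennreal_of_nat_eq_real_of_nat ennreal_mult[symmetric] ennreal_plus[symmetric]
        del: ennreal_plus)
  finally have "ennreal (u * n) \<le> (\<Sum>k<n. kernel_pow K k h x)"
    by (simp add: ennreal_add_left_cancel_le)
  then have "ennreal (u * n) / ennreal n \<le> cesaro_avg K n h x"
    unfolding cesaro_avg_def by (rule divide_right_mono_ennreal)
  then show ?thesis
    using \<open>u \<ge> 0\<close> \<open>n > 0\<close> by (simp add: ennreal_mult ennreal_mult_divide_eq)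
qed

end

lemma nn_integral_cesaro_indicator_ge:
  fixes m :: "'a measure" and V b :: "'a \<Rightarrow> real"
  assumes m_sets: "sets m = sets M"
    and V: "V \<in> borel_measurable M" and b: "b \<in> borel_measurable M"
    and b_nonneg: "\<And>x. x \<in> space M \<Longrightarrow> b x \<ge> 0" and C: "C \<in> sets M"
    and drift: "\<And>x. x \<in> space M \<Longrightarrow>
        kernel_op K (\<lambda>y. ennreal (V y)) x + 1 \<le> ennreal (V x) + ennreal (b x) * indicator C x"
    and "u > 0" "n > 0" "2 * r \<le> real n"
  shows "ennreal u * emeasure m {y \<in> space M. V y \<le> r}
    \<le> ennreal (u\<^sup>2) * (\<integral>\<^sup>+ x. indicator {y \<in> space M. V y \<le> r} x *
          cesaro_avg K n (\<lambda>y. ennreal ((b y)\<^sup>2)) x \<partial>m)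
      + (\<integral>\<^sup>+ x. cesaro_avg K n (indicator C) x \<partial>m)"
proof -
  define A where "A = {y \<in> space M. V y \<le> r}"
  define Sb2 where "Sb2 = cesaro_avg K n (\<lambda>y. ennreal ((b y)\<^sup>2))"
  define SC where "SC = cesaro_avg K n (indicator C)"
  have [measurable]: "A \<in> sets m" "Sb2 \<in> borel_measurable m" "SC \<in> borel_measurable m"
    unfolding A_def Sb2_def SC_def measurable_cong_sets[OF m_sets refl] m_sets
    using V b C by (auto intro: measurable_cesaro_avg)
  have "ennreal u * indicator A x \<le> ennreal (u\<^sup>2) * (indicator A x * Sb2 x) + SC x"
    if "x \<in> space m" for x
  proof (cases "x \<in> A")
    case True
    then have x: "x \<in> space M" and "2 * V x \<le> real n"
      using \<open>2 * r \<le> real n\<close> by (auto simp: A_def)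
    then have "ennreal (2 * V x) \<le> ennreal (real n)"
      by (intro ennreal_leI)
    then have "2 * ennreal (V x) \<le> of_nat n"
      by (simp add: ennreal_mult' ennreal_of_nat_eq_real_of_nat)
    from cesaro_avg_ge_of_drift[OF _ _ drift ennreal_two_mult_indicator_le _ x \<open>n > 0\<close> this]
    have "ennreal u \<le> cesaro_avg K n (\<lambda>y. ennreal (u\<^sup>2) * ennreal ((b y)\<^sup>2) + indicator C y) x"
      using V b C b_nonneg \<open>u > 0\<close> by simp
    then show ?thesis
      using True x b C by (simp add: cesaro_avg_cmult_add Sb2_def SC_def)
  qed simp
  then have "(\<integral>\<^sup>+ x. ennreal u * indicator A x \<partial>m)
      \<le> (\<integral>\<^sup>+ x. ennreal (u\<^sup>2) * (indicator A x * Sb2 x) + SC x \<partial>m)"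
    by (rule nn_integral_mono)
  then show ?thesis
    unfolding A_def[symmetric] Sb2_def[symmetric] SC_def[symmetric]
    by (simp add: nn_integral_cmult_indicator nn_integral_add nn_integral_cmult)
qed

end

lemma emeasure_sublevel_set_pos:
  fixes V :: "'a \<Rightarrow> real"
  assumes "emeasure m (space m) \<noteq> 0" and V: "V \<in> borel_measurable m"
  shows "\<exists>r>0. 0 < emeasure m {y \<in> space m. V y \<le> r}"
proof (rule ccontr)
  define A where "A k = {y \<in> space m. V y \<le> real (Suc k)}" for k
  assume "\<not> ?thesis"
  then have null: "emeasure m (A k) = 0" for k
    by (auto simp: A_def)
  have "(\<Union>k. A k) = space m"
  proof (intro set_eqI iffI)
    fix y assume "y \<in> space m"
    moreover have "V y \<le> real (Suc (nat \<lceil>V y\<rceil>))"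
      by linarith
    ultimately show "y \<in> (\<Union>k. A k)"
      unfolding A_def by blast
  qed (auto simp: A_def)
  moreover have "range A \<subseteq> sets m" "incseq A"
    using V by (auto simp: A_def incseq_def)
  ultimately have "emeasure m (space m) = (SUP k. emeasure m (A k))"
    by (simp add: SUP_emeasure_incseq)
  then show False
    using assms(1) null by simp
qed

lemma INF_pos_of_quadratic_bounds:
  fixes a B :: ennreal and I :: "'i \<Rightarrow> ennreal"
  assumes "0 < a" "a < \<infinity>" "B < \<infinity>"
    and bound: "\<And>i u. i \<in> N \<Longrightarrow> u > 0 \<Longrightarrow> ennreal u * a \<le> ennreal (u\<^sup>2) * B + I i"
  shows "0 < (INF i\<in>N. I i)"
proof -
  obtain a' B' where a: "a = ennreal a'" "a' > 0" and B: "B = ennreal B'" "B' \<ge> 0"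
    using assms(1-3) by (cases a; cases B) (auto simp: ennreal_less_zero_iff)
  define u where "u = a' / (2 * (B' + 1))"
  have "u > 0"
    using a B by (simp add: u_def)
  have "u * B' \<le> a' / 2"
    using a B by (simp add: u_def field_simps)
  then have "u\<^sup>2 * B' \<le> u * a' / 2"
    using \<open>u > 0\<close> mult_left_mono[of "u * B'" "a' / 2" u] by (simp add: power2_eq_square mult_ac)
  then have uB: "ennreal (u\<^sup>2) * B \<le> ennreal (u * a' / 2)"
    using B by (simp add: ennreal_mult[symmetric] ennreal_leI)
  have "ennreal (u * a' / 2) \<le> I i" if "i \<in> N" for i
  proof -
    have "ennreal (u * a' / 2) + ennreal (u * a' / 2) = ennreal u * a"
      using \<open>u > 0\<close> a by (simp add: ennreal_mult mult.commute flip: ennreal_plus)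
    also have "\<dots> \<le> ennreal (u * a' / 2) + I i"
      using bound[OF that \<open>u > 0\<close>] uB by (meson add_right_mono order_trans)
    finally show ?thesis
      by (simp add: ennreal_add_left_cancel_le)
  qed
  then have "ennreal (u * a' / 2) \<le> (INF i\<in>N. I i)"
    by (rule INF_greatest)
  moreover have "0 < ennreal (u * a' / 2)"
    using \<open>u > 0\<close> a by simp
  ultimately show ?thesis
    by (rule order_less_le_trans[rotated])
qed

theorem proposition3p10:
  fixes M :: "'a measure" and K :: "'a \<Rightarrow> 'a measure" and m :: "'a measure"
    and V b :: "'a \<Rightarrow> real" and C :: "'a set"
  assumes K_markov: "K \<in> M \<rightarrow>\<^sub>M prob_algebra M"
    and m_finite: "finite_measure m" and m_sets: "sets m = sets M"
    and m_nonzero: "emeasure m (space M) \<noteq> 0"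
    and V_meas: "V \<in> borel_measurable M" and V_nonneg: "\<And>x. x \<in> space M \<Longrightarrow> V x \<ge> 0"
    and b_meas: "b \<in> borel_measurable M" and b_nonneg: "\<And>x. x \<in> space M \<Longrightarrow> b x \<ge> 0"
    and C_meas: "C \<in> sets M"
    and drift: "\<And>x. x \<in> space M \<Longrightarrow>
        kernel_op K (\<lambda>y. ennreal (V y)) x + 1 \<le> ennreal (V x) + ennreal (b x) * indicator C x"
    and condD: "\<And>r::real. r > 0 \<Longrightarrow> \<exists>N0::nat. N0 > 0 \<and>
        (SUP n\<in>{N0..}. \<integral>\<^sup>+ x. indicator {y \<in> space M. V y \<le> r} x *
            cesaro_avg K n (\<lambda>y. ennreal ((b y)\<^sup>2)) x \<partial>m) < \<infinity>"
  shows "\<exists>n0::nat. n0 > 0 \<and> (INF n\<in>{n0..}. \<integral>\<^sup>+ x. cesaro_avg K n (indicator C) x \<partial>m) > 0"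
proof -
  interpret markov_kernel M K
    using K_markov by unfold_locales
  have space_m: "space m = space M"
    using m_sets by (rule sets_eq_imp_space_eq)
  obtain r where "r > 0" and A_pos: "0 < emeasure m {y \<in> space M. V y \<le> r}"
    using emeasure_sublevel_set_pos[of m V] m_nonzero V_meas
    by (auto simp: space_m measurable_cong_sets[OF m_sets refl])
  have A_fin: "emeasure m {y \<in> space M. V y \<le> r} < \<infinity>"
    using finite_measure.emeasure_finite[OF m_finite] by (simp add: less_top)
  obtain N0 :: nat where "N0 > 0" and B_fin: "(SUP n\<in>{N0..}. \<integral>\<^sup>+ x. indicator {y \<in> space M. V y \<le> r} x *
      cesaro_avg K n (\<lambda>y. ennreal ((b y)\<^sup>2)) x \<partial>m) < \<infinity>" (is "?B < \<infinity>")
    using condD[OF \<open>r > 0\<close>] by blast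
  define n0 where "n0 = max N0 (nat \<lceil>2 * r\<rceil>)"
  have "0 < (INF n\<in>{n0..}. \<integral>\<^sup>+ x. cesaro_avg K n (indicator C) x \<partial>m)"
  proof (rule INF_pos_of_quadratic_bounds[OF A_pos A_fin B_fin])
    fix n :: nat and u :: real
    assume "n \<in> {n0..}" "u > 0"
    then have "n > 0" "2 * r \<le> real n" "n \<in> {N0..}"
      using \<open>N0 > 0\<close> by (auto simp: n0_def)
    from nn_integral_cesaro_indicator_ge[OF m_sets V_meas b_meas b_nonneg C_meas drift \<open>u > 0\<close> this(1,2)]
      SUP_upper[OF this(3)]
    show "ennreal u * emeasure m {y \<in> space M. V y \<le> r}
        \<le> ennreal (u\<^sup>2) * ?B + (\<integral>\<^sup>+ x. cesaro_avg K n (indicator C) x \<partial>m)"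
      by (meson add_right_mono mult_left_mono order_trans zero_le)
  qed
  moreover have "n0 > 0"
    using \<open>N0 > 0\<close> by (simp add: n0_def)
  ultimately show ?thesis
    by blast
qed

end
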